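(* Let $G_1=(V,D_1)$ and $G_2=(V,D_2)$ be two simple directed graphs on the same node set $V$. If at least one of $G_1,G_2$ is not complete and there exists a node $i\in V$ such that $|\mathrm{ch}_1(i)|\neq|\mathrm{ch}_2(i)|$, then $G_1$ and $G_2$ have different Jacobian matroids.
   Context: A directed graph $G=(V,D)$ has a finite node set $V$ and edge set $D\subseteq V\times V$ of ordered pairs $(i,j)$, $i\neq j$, written $i\to j$. It is simple if $(i,j)$ and $(j,i)$ are never both in $D$. It is complete if every pair of distinct nodes is adjacent, i.e. joined by an edge in some direction. $\mathrm{ch}_k(i)=\{j:(i,j)\in D_k\}$ is the set of children of $i$ in $G_k$. For $G=(V,D)$ let $\Lambda=(\lambda_{ij})$ be the $V\times V$ matrix with indeterminate entries $\lambda_{ij}$ for $(i,j)\in D$ and zeros elsewhere, and let $s$ be a further indeterminate. The precision parameterization is $\psi_G(\Lambda,s)=s(I-\Lambda)(I-\Lambda)^T=K=(K_{ij})$. The (transposed) Jacobian $J=J(\psi_G)$ has one row for each parameter $\lambda_{kl}$, $(k,l)\in D$, and one row for $s$. It has one column for each entry $K_{ij}$ with $i\le j$ (equivalently, for each unordered pair $\{i,j\}$, including $i=j$). The entry in row $\theta$, column $K_{ij}$ is $\partial K_{ij}/\partial\theta$. The Jacobian matroid of $G$ is the matroid on this set of columns in which a set of columns is independent iff the columns are linearly independent over the field $\mathbb{R}(\lambda,s)$ of rational functions in the parameters. *)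

theory Defs
  imports "HOL-Analysis.Analysis"
begin

definition digraph :: "'v set \<Rightarrow> ('v \<times> 'v) set \<Rightarrow> bool" where
  "digraph V D \<longleftrightarrow> finite V \<and> D \<subseteq> V \<times> V \<and> (\<forall>i. (i, i) \<notin> D)"

definition simple_digraph :: "'v set \<Rightarrow> ('v \<times> 'v) set \<Rightarrow> bool" where
  "simple_digraph V D \<longleftrightarrow> digraph V D \<and> (\<forall>i j. (i, j) \<in> D \<longrightarrow> (j, i) \<notin> D)"

definition complete_digraph :: "'v set \<Rightarrow> ('v \<times> 'v) set \<Rightarrow> bool" where
  "complete_digraph V D \<longleftrightarrow>
     (\<forall>i\<in>V. \<forall>j\<in>V. i \<noteq> j \<longrightarrow> (i, j) \<in> D \<or> (j, i) \<in> D)"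

definition ch :: "('v \<times> 'v) set \<Rightarrow> 'v \<Rightarrow> 'v set" where
  "ch D i = {j. (i, j) \<in> D}"

text \<open>Parameters are coordinates of a point x :: ('v \<times> 'v) option \<Rightarrow> real:
  Some (k,l) is lambda_kl (for (k,l) in D), None is s.\<close>

type_synonym 'v param = "('v \<times> 'v) option"

definition params :: "('v \<times> 'v) set \<Rightarrow> 'v param set" where
  "params D = Some ` D \<union> {None}"

definition Lam :: "('v \<times> 'v) set \<Rightarrow> ('v param \<Rightarrow> real) \<Rightarrow> 'v \<Rightarrow> 'v \<Rightarrow> real" where
  "Lam D x i j = (if (i, j) \<in> D then x (Some (i, j)) else 0)"

text \<open>K = s (I - Lambda)(I - Lambda)^T, entrywise.\<close>
definition Kmat :: "'v set \<Rightarrow> ('v \<times> 'v) set \<Rightarrow> ('v param \<Rightarrow> real) \<Rightarrow> 'v \<Rightarrow> 'v \<Rightarrow> real" where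
  "Kmat V D x i j = x None *
     (\<Sum>k\<in>V. ((if i = k then 1 else 0) - Lam D x i k) * ((if j = k then 1 else 0) - Lam D x j k))"

text \<open>Columns of J: the entries K_ij with i \<le> j.\<close>
definition cols :: "'v::linorder set \<Rightarrow> ('v \<times> 'v) set" where
  "cols V = {(i, j). i \<in> V \<and> j \<in> V \<and> i \<le> j}"

definition jac :: "'v set \<Rightarrow> ('v \<times> 'v) set \<Rightarrow> 'v param \<Rightarrow> 'v \<times> 'v \<Rightarrow> ('v param \<Rightarrow> real) \<Rightarrow> real" where
  "jac V D \<theta> c x = deriv (\<lambda>t. Kmat V D (x(\<theta> := t)) (fst c) (snd c)) (x \<theta>)"

text \<open>The real polynomial ring R[lambda, s] in the parameter indeterminates, realised as
  polynomial functions (faithful since R is infinite).\<close>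
inductive_set polyfun :: "'p set \<Rightarrow> (('p \<Rightarrow> real) \<Rightarrow> real) set" for P :: "'p set" where
  const: "(\<lambda>x. c) \<in> polyfun P"
| var: "\<theta> \<in> P \<Longrightarrow> (\<lambda>x. x \<theta>) \<in> polyfun P"
| add: "f \<in> polyfun P \<Longrightarrow> g \<in> polyfun P \<Longrightarrow> (\<lambda>x. f x + g x) \<in> polyfun P"
| mult: "f \<in> polyfun P \<Longrightarrow> g \<in> polyfun P \<Longrightarrow> (\<lambda>x. f x * g x) \<in> polyfun P"

text \<open>A set C of columns is linearly independent over R(lambda,s) iff there is no
  nontrivial linear relation with coefficients in R(lambda,s); after clearing
  denominators, iff there is no relation with polynomial coefficients not all zero.\<close>
definition jac_indep :: "'v set \<Rightarrow> ('v \<times> 'v) set \<Rightarrow> ('v \<times> 'v) set \<Rightarrow> bool" where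
  "jac_indep V D C \<longleftrightarrow>
     \<not> (\<exists>p :: 'v \<times> 'v \<Rightarrow> ('v param \<Rightarrow> real) \<Rightarrow> real.
          (\<forall>c\<in>C. p c \<in> polyfun (params D)) \<and>
          (\<exists>c\<in>C. \<exists>x. p c x \<noteq> 0) \<and>
          (\<forall>\<theta>\<in>params D. \<forall>x. (\<Sum>c\<in>C. p c x * jac V D \<theta> c x) = 0))"

definition jacobian_matroid :: "'v::linorder set \<Rightarrow> ('v \<times> 'v) set \<Rightarrow> ('v \<times> 'v) set set" where
  "jacobian_matroid V D = {C. C \<subseteq> cols V \<and> jac_indep V D C}"

end

theory Submission
  imports Defs "HOL-Computational_Algebra.Polynomial"
begin

text \<open>
  The Jacobian has one row per parameter, i.e. \<open>|D| + 1\<close> rows. At the point \<open>s = 1\<close>, \<open>\<Lambda> = 0\<close>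
  the row of \<open>\<lambda>\<^sub>k\<^sub>l\<close> is minus the unit vector of the column \<open>K\<^sub>k\<^sub>l\<close>, so the matroid has rank
  \<open>|D| + 1\<close>. For a node \<open>k\<close>, the rows \<open>\<lambda>\<^sub>k\<^sub>b\<close> with \<open>b \<in> ch(k)\<close> vanish on every column
  \<open>K\<^sub>i\<^sub>j\<close> with \<open>i, j \<noteq> k\<close>, so these columns have rank at most \<open>|D| - |ch(k)| + 1\<close>. Evaluating at
  the point where in addition \<open>\<lambda>\<^sub>j\<^sub>k = 1\<close> for the parents \<open>j\<close> of \<open>k\<close> exhibits an independent set of
  that size, provided \<open>k\<close> has a child or the graph is not complete. Hence the matroid
  determines \<open>|D|\<close> and every such \<open>|ch(k)|\<close>. As the \<open>|ch(k)|\<close> sum to \<open>|D|\<close>, two graphs with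
  the same matroid but different child counts have nodes where either count exceeds the
  other, and at one of them the non-complete graph supplies the hypothesis.

  Independence over \<open>\<real>(\<lambda>, s)\<close> is handled by fraction-free elimination: more columns than
  rows always admit a polynomial relation, and columns that are independent at a single real
  point admit none.
\<close>

section \<open>Polynomial functions and linear relations\<close>

lemma polyfun_diff:
  assumes "f \<in> polyfun P" "g \<in> polyfun P"
  shows "(\<lambda>x. f x - g x) \<in> polyfun P"
proof -
  have "(\<lambda>x. f x + (\<lambda>x. -1) x * g x) \<in> polyfun P"
    by (intro polyfun.add polyfun.mult polyfun.const assms)
  then show ?thesis by simp
qed

lemma polyfun_sum:
  assumes "finite A" "\<And>a. a \<in> A \<Longrightarrow> f a \<in> polyfun P"
  shows "(\<lambda>x. \<Sum>a\<in>A. f a x) \<in> polyfun P"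
  using assms
proof (induction A rule: finite_induct)
  case empty
  then show ?case using polyfun.const[of 0] by simp
next
  case (insert a A)
  then have "(\<lambda>x. f a x + (\<lambda>x. \<Sum>a\<in>A. f a x) x) \<in> polyfun P"
    by (intro polyfun.add) auto
  then show ?case using insert by simp
qed

lemma polyfun_on_line:
  assumes "f \<in> polyfun P"
  shows "\<exists>q. \<forall>t. f (\<lambda>\<theta>. x \<theta> + t * (y \<theta> - x \<theta>)) = poly q t"
  using assms
proof (induction rule: polyfun.induct)
  case (const c)
  show ?case by (rule exI[of _ "[:c:]"]) simp
next
  case (var \<theta>)
  show ?case by (rule exI[of _ "[:x \<theta>, y \<theta> - x \<theta>:]"]) (simp add: algebra_simps)
next
  case (add f g)
  then obtain q1 q2 where "\<forall>t. f (\<lambda>\<theta>. x \<theta> + t * (y \<theta> - x \<theta>)) = poly q1 t"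
    and "\<forall>t. g (\<lambda>\<theta>. x \<theta> + t * (y \<theta> - x \<theta>)) = poly q2 t" by blast
  then show ?case by (intro exI[of _ "q1 + q2"]) simp
next
  case (mult f g)
  then obtain q1 q2 where "\<forall>t. f (\<lambda>\<theta>. x \<theta> + t * (y \<theta> - x \<theta>)) = poly q1 t"
    and "\<forall>t. g (\<lambda>\<theta>. x \<theta> + t * (y \<theta> - x \<theta>)) = poly q2 t" by blast
  then show ?case by (intro exI[of _ "q1 * q2"]) simp
qed

lemma polyfun_no_zero_divisors:
  assumes f: "f \<in> polyfun P" and g: "g \<in> polyfun P"
    and fg: "\<And>x. f x * g x = 0" and g0: "g x0 \<noteq> 0"
  shows "f y = 0"
proof -
  obtain qf where qf: "\<forall>t. f (\<lambda>\<theta>. x0 \<theta> + t * (y \<theta> - x0 \<theta>)) = poly qf t"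
    using polyfun_on_line[OF f] by blast
  obtain qg where qg: "\<forall>t. g (\<lambda>\<theta>. x0 \<theta> + t * (y \<theta> - x0 \<theta>)) = poly qg t"
    using polyfun_on_line[OF g] by blast
  have "\<forall>t. poly (qf * qg) t = 0" using qf qg fg by (metis poly_mult)
  then have "qf * qg = 0" using poly_all_0_iff_0 by blast
  moreover have "qg \<noteq> 0" using qg[rule_format, of 0] g0 by auto
  ultimately have "qf = 0" by simp
  then show ?thesis using qf[rule_format, of 1] by simp
qed

definition poly_relation ::
    "'p set \<Rightarrow> 'r set \<Rightarrow> 'c set \<Rightarrow> ('r \<Rightarrow> 'c \<Rightarrow> ('p \<Rightarrow> real) \<Rightarrow> real) \<Rightarrow>
     ('c \<Rightarrow> ('p \<Rightarrow> real) \<Rightarrow> real) \<Rightarrow> bool" where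
  "poly_relation P R C v p \<longleftrightarrow>
     (\<forall>c\<in>C. p c \<in> polyfun P) \<and> (\<forall>\<rho>\<in>R. \<forall>x. (\<Sum>c\<in>C. p c x * v \<rho> c x) = 0)"

definition indep_at :: "'r set \<Rightarrow> 'c set \<Rightarrow> ('r \<Rightarrow> 'c \<Rightarrow> 'x \<Rightarrow> real) \<Rightarrow> 'x \<Rightarrow> bool" where
  "indep_at R C v x0 \<longleftrightarrow> (\<forall>a. (\<forall>\<rho>\<in>R. (\<Sum>c\<in>C. a c * v \<rho> c x0) = 0) \<longrightarrow> (\<forall>c\<in>C. a c = 0))"

text \<open>Fraction-free elimination of column \<open>c0\<close> with the pivot entry in row \<open>\<rho>0\<close>.\<close>
definition pivot_elim :: "('r \<Rightarrow> 'c \<Rightarrow> 'x \<Rightarrow> real) \<Rightarrow> 'r \<Rightarrow> 'c \<Rightarrow> 'r \<Rightarrow> 'c \<Rightarrow> 'x \<Rightarrow> real" where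
  "pivot_elim v \<rho>0 c0 \<rho> c x = v \<rho>0 c0 x * v \<rho> c x - v \<rho>0 c x * v \<rho> c0 x"

lemma polyfun_pivot_elim:
  "v \<rho>0 c0 \<in> polyfun P \<Longrightarrow> v \<rho> c \<in> polyfun P \<Longrightarrow> v \<rho>0 c \<in> polyfun P \<Longrightarrow> v \<rho> c0 \<in> polyfun P \<Longrightarrow>
    pivot_elim v \<rho>0 c0 \<rho> c \<in> polyfun P"
  unfolding pivot_elim_def[abs_def] by (intro polyfun_diff polyfun.mult)

lemma sum_pivot_elim:
  "(\<Sum>c\<in>C. q c * pivot_elim v \<rho>0 c0 \<rho> c x)
     = v \<rho>0 c0 x * (\<Sum>c\<in>C. q c * v \<rho> c x) - (\<Sum>c\<in>C. q c * v \<rho>0 c x) * v \<rho> c0 x"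
  by (simp add: pivot_elim_def algebra_simps sum_subtractf sum_distrib_left sum_distrib_right)

text \<open>Coefficients on the remaining columns lift back to coefficients on all columns.\<close>
lemma sum_pivot_lift:
  assumes "finite C" "c0 \<notin> C"
  shows "(\<Sum>c\<in>insert c0 C. (if c = c0 then - (\<Sum>c\<in>C. q c * v \<rho>0 c x) else q c * v \<rho>0 c0 x) * v \<rho> c x)
       = (\<Sum>c\<in>C. q c * pivot_elim v \<rho>0 c0 \<rho> c x)"
proof -
  have "(\<Sum>c\<in>C. (if c = c0 then - (\<Sum>c\<in>C. q c * v \<rho>0 c x) else q c * v \<rho>0 c0 x) * v \<rho> c x)
      = v \<rho>0 c0 x * (\<Sum>c\<in>C. q c * v \<rho> c x)"
    using assms(2) by (auto simp: sum_distrib_left intro: sum.cong)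
  then show ?thesis using assms by (simp add: sum_pivot_elim)
qed

lemma poly_relation_pivot_lift:
  assumes C: "finite C" "c0 \<notin> C"
    and v: "v \<rho>0 c0 \<in> polyfun P" "\<And>c. c \<in> C \<Longrightarrow> v \<rho>0 c \<in> polyfun P"
    and q: "poly_relation P R C (pivot_elim v \<rho>0 c0) q"
  shows "poly_relation P (insert \<rho>0 R) (insert c0 C) v
    (\<lambda>c x. if c = c0 then - (\<Sum>c\<in>C. q c x * v \<rho>0 c x) else q c x * v \<rho>0 c0 x)"
  unfolding poly_relation_def
proof (intro conjI ballI allI)
  have qC: "\<forall>c\<in>C. q c \<in> polyfun P" using q by (simp add: poly_relation_def)
  fix c assume "c \<in> insert c0 C"
  have "(\<lambda>x. (\<lambda>x. -1) x * (\<lambda>x. \<Sum>c\<in>C. q c x * v \<rho>0 c x) x) \<in> polyfun P"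
    using qC v C by (intro polyfun.mult polyfun.const polyfun_sum) auto
  moreover have "(\<lambda>x. q c x * v \<rho>0 c0 x) \<in> polyfun P" if "c \<in> C"
    using qC v that by (auto intro: polyfun.mult)
  ultimately show "(\<lambda>x. if c = c0 then - (\<Sum>c\<in>C. q c x * v \<rho>0 c x) else q c x * v \<rho>0 c0 x) \<in> polyfun P"
    using C \<open>c \<in> insert c0 C\<close> by (cases "c = c0") auto
next
  fix \<rho> x assume "\<rho> \<in> insert \<rho>0 R"
  have "(\<Sum>c\<in>insert c0 C.
      (if c = c0 then - (\<Sum>c\<in>C. q c x * v \<rho>0 c x) else q c x * v \<rho>0 c0 x) * v \<rho> c x)
      = (\<Sum>c\<in>C. q c x * pivot_elim v \<rho>0 c0 \<rho> c x)"
    by (rule sum_pivot_lift[OF C])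
  also have "\<dots> = 0"
    using q \<open>\<rho> \<in> insert \<rho>0 R\<close> by (auto simp: poly_relation_def pivot_elim_def)
  finally show "(\<Sum>c\<in>insert c0 C.
      (if c = c0 then - (\<Sum>c\<in>C. q c x * v \<rho>0 c x) else q c x * v \<rho>0 c0 x) * v \<rho> c x) = 0" .
qed

lemma poly_relation_nontrivial_exists:
  fixes v :: "'r \<Rightarrow> 'c \<Rightarrow> ('p \<Rightarrow> real) \<Rightarrow> real"
  assumes "finite R" "finite C" "card R < card C"
    and "\<And>\<rho> c. \<rho> \<in> R \<Longrightarrow> c \<in> C \<Longrightarrow> v \<rho> c \<in> polyfun P"
  shows "\<exists>p. poly_relation P R C v p \<and> (\<exists>c\<in>C. \<exists>x. p c x \<noteq> 0)"
  using assms
proof (induction R arbitrary: C v rule: finite_induct)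
  case empty
  then obtain c where "c \<in> C" by fastforce
  then show ?case by (intro exI[of _ "\<lambda>c x. 1"]) (auto simp: poly_relation_def intro: polyfun.const)
next
  case (insert \<rho>0 R)
  show ?case
  proof (cases "\<forall>c\<in>C. \<forall>x. v \<rho>0 c x = 0")
    case True
    with insert show ?thesis
      using insert.IH[of C v] by (auto simp: poly_relation_def)
  next
    case False
    then obtain c0 x0 where c0: "c0 \<in> C" and x0: "v \<rho>0 c0 x0 \<noteq> 0" by blast
    define C' where "C' = C - {c0}"
    have C: "C = insert c0 C'" "c0 \<notin> C'" "finite C'" using c0 insert.prems by (auto simp: C'_def)
    have v: "v \<rho> c \<in> polyfun P" if "\<rho> \<in> insert \<rho>0 R" "c \<in> C" for \<rho> c
      using insert.prems that by blast
    have "card R < card C'" using insert C by simp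
    moreover have "pivot_elim v \<rho>0 c0 \<rho> c \<in> polyfun P" if "\<rho> \<in> R" "c \<in> C'" for \<rho> c
      using that C by (intro polyfun_pivot_elim v) auto
    ultimately obtain q where q: "poly_relation P R C' (pivot_elim v \<rho>0 c0) q" "\<exists>c\<in>C'. \<exists>x. q c x \<noteq> 0"
      using insert.IH[of C' "pivot_elim v \<rho>0 c0"] C by blast
    then obtain c1 x1 where c1: "c1 \<in> C'" "q c1 x1 \<noteq> 0" by blast
    have nonzero: "\<exists>x. q c1 x * v \<rho>0 c0 x \<noteq> 0"
      using polyfun_no_zero_divisors[of "q c1" P "v \<rho>0 c0" x0 x1] q(1) c1 v c0 x0
      by (auto simp: poly_relation_def)
    define p where "p = (\<lambda>c x. if c = c0 then - (\<Sum>c\<in>C'. q c x * v \<rho>0 c x) else q c x * v \<rho>0 c0 x)"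
    have "poly_relation P (insert \<rho>0 R) C v p"
      unfolding p_def using poly_relation_pivot_lift[OF C(3,2) _ _ q(1)] v C(1) by auto
    moreover have "\<exists>x. p c1 x \<noteq> 0" using nonzero c1 C(2) by (auto simp: p_def)
    ultimately show ?thesis using c1 C(1) by blast
  qed
qed

lemma indep_at_pivot_elim:
  assumes C: "finite C" "c0 \<notin> C" and \<rho>0: "\<rho>0 \<in> R" "v \<rho>0 c0 x0 \<noteq> 0"
    and indep: "indep_at R (insert c0 C) v x0"
  shows "indep_at R C (pivot_elim v \<rho>0 c0) x0"
  unfolding indep_at_def
proof (intro allI impI)
  fix a assume a: "\<forall>\<rho>\<in>R. (\<Sum>c\<in>C. a c * pivot_elim v \<rho>0 c0 \<rho> c x0) = 0"
  define b where "b = (\<lambda>c. if c = c0 then - (\<Sum>c\<in>C. a c * v \<rho>0 c x0) else a c * v \<rho>0 c0 x0)"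
  have "\<forall>\<rho>\<in>R. (\<Sum>c\<in>insert c0 C. b c * v \<rho> c x0) = 0"
    using a by (simp add: b_def sum_pivot_lift[OF C])
  then have "\<forall>c\<in>insert c0 C. b c = 0" using indep by (simp add: indep_at_def)
  then have "a c * v \<rho>0 c0 x0 = 0" if "c \<in> C" for c
    using that C(2) by (auto simp: b_def split: if_splits)
  then show "\<forall>c\<in>C. a c = 0" using \<rho>0 by simp
qed

lemma poly_relation_pivot_elim:
  assumes C: "finite C" "c0 \<notin> C" and "\<rho>0 \<in> R"
    and p: "poly_relation P R (insert c0 C) v p"
  shows "poly_relation P R C (pivot_elim v \<rho>0 c0) p"
proof -
  have row: "(\<Sum>c\<in>C. p c x * v \<rho> c x) = - (p c0 x * v \<rho> c0 x)" if "\<rho> \<in> R" for \<rho> x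
    using p C that by (simp add: poly_relation_def eq_neg_iff_add_eq_0 add.commute)
  show ?thesis
    using p \<open>\<rho>0 \<in> R\<close> by (simp add: poly_relation_def sum_pivot_elim row)
qed

lemma poly_relation_trivial_if_indep_at:
  fixes v :: "'r \<Rightarrow> 'c \<Rightarrow> ('p \<Rightarrow> real) \<Rightarrow> real"
  assumes "finite C" "\<And>\<rho> c. \<rho> \<in> R \<Longrightarrow> c \<in> C \<Longrightarrow> v \<rho> c \<in> polyfun P"
    and "indep_at R C v x0" "poly_relation P R C v p"
  shows "\<forall>c\<in>C. \<forall>x. p c x = 0"
  using assms
proof (induction C arbitrary: v rule: finite_induct)
  case empty
  then show ?case by simp
next
  case (insert c0 C)
  have "\<exists>\<rho>\<in>R. v \<rho> c0 x0 \<noteq> 0"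
  proof (rule ccontr)
    assume "\<not> ?thesis"
    then have "\<forall>\<rho>\<in>R. (\<Sum>c\<in>insert c0 C. (if c = c0 then 1 else 0) * v \<rho> c x0) = 0"
      using insert.hyps by (auto intro!: sum.neutral)
    then show False using insert.prems(2) by (force simp: indep_at_def)
  qed
  then obtain \<rho>0 where \<rho>0: "\<rho>0 \<in> R" "v \<rho>0 c0 x0 \<noteq> 0" by blast
  have "\<forall>c\<in>C. \<forall>x. p c x = 0"
    using insert.IH[of "pivot_elim v \<rho>0 c0"] insert.prems \<rho>0
      indep_at_pivot_elim[OF insert.hyps \<rho>0 insert.prems(2)]
      poly_relation_pivot_elim[OF insert.hyps \<rho>0(1) insert.prems(3)]
    by (auto intro: polyfun_pivot_elim)
  moreover from this have "p c0 x * v \<rho>0 c0 x = 0" for x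
    using insert.prems(3) \<rho>0 insert.hyps by (simp add: poly_relation_def)
  then have "p c0 y = 0" for y
    using polyfun_no_zero_divisors[of "p c0" P "v \<rho>0 c0" x0] insert.prems \<rho>0
    by (auto simp: poly_relation_def)
  ultimately show ?case by auto
qed

section \<open>The Jacobian of the precision parameterization\<close>

definition id_minus_Lam :: "('v \<times> 'v) set \<Rightarrow> ('v param \<Rightarrow> real) \<Rightarrow> 'v \<Rightarrow> 'v \<Rightarrow> real" where
  "id_minus_Lam D x i k = (if i = k then 1 else 0) - Lam D x i k"

definition dLam :: "('v \<times> 'v) set \<Rightarrow> 'v param \<Rightarrow> 'v \<Rightarrow> 'v \<Rightarrow> real" where
  "dLam D \<theta> i k = (if (i, k) \<in> D \<and> \<theta> = Some (i, k) then 1 else 0)"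

lemma Kmat_eq: "Kmat V D x i j = x None * (\<Sum>k\<in>V. id_minus_Lam D x i k * id_minus_Lam D x j k)"
  by (simp add: Kmat_def id_minus_Lam_def)

lemma fun_upd_has_real_derivative:
  "((\<lambda>t. (x(\<theta> := t)) \<phi>) has_real_derivative (if \<phi> = \<theta> then 1 else 0)) (at t0)"
  by (cases "\<phi> = \<theta>") (auto intro!: derivative_eq_intros)

lemma Lam_has_real_derivative:
  "((\<lambda>t. Lam D (x(\<theta> := t)) i k) has_real_derivative dLam D \<theta> i k) (at t0)"
  using fun_upd_has_real_derivative[of x \<theta> "Some (i, k)" t0]
  by (cases "(i, k) \<in> D") (auto simp: Lam_def dLam_def eq_commute)

lemma id_minus_Lam_has_real_derivative:
  "((\<lambda>t. id_minus_Lam D (x(\<theta> := t)) i k) has_real_derivative - dLam D \<theta> i k) (at t0)"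
  unfolding id_minus_Lam_def by (auto intro!: derivative_eq_intros Lam_has_real_derivative)

lemma Kmat_has_real_derivative:
  "((\<lambda>t. Kmat V D (x(\<theta> := t)) i j) has_real_derivative
     (if \<theta> = None then 1 else 0) * (\<Sum>k\<in>V. id_minus_Lam D x' i k * id_minus_Lam D x' j k)
     - x' None * (\<Sum>k\<in>V. dLam D \<theta> i k * id_minus_Lam D x' j k + id_minus_Lam D x' i k * dLam D \<theta> j k))
   (at t0)" if "x' = x(\<theta> := t0)"
  unfolding Kmat_eq that
  by (rule DERIV_cong[OF DERIV_mult'[OF fun_upd_has_real_derivative DERIV_sum[OF DERIV_mult'[OF
        id_minus_Lam_has_real_derivative id_minus_Lam_has_real_derivative]]]])
    (simp add: sum.distrib sum_negf sum_subtractf algebra_simps)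

lemma jac_eq:
  "jac V D \<theta> (i, j) x = (if \<theta> = None then 1 else 0) * (\<Sum>k\<in>V. id_minus_Lam D x i k * id_minus_Lam D x j k)
     - x None * (\<Sum>k\<in>V. dLam D \<theta> i k * id_minus_Lam D x j k + id_minus_Lam D x i k * dLam D \<theta> j k)"
  unfolding jac_def using DERIV_imp_deriv[OF Kmat_has_real_derivative[of x x \<theta> "x \<theta>"]] by simp

lemma jac_None: "jac V D None (i, j) x = (\<Sum>k\<in>V. id_minus_Lam D x i k * id_minus_Lam D x j k)"
  by (simp add: jac_eq dLam_def)

lemma sum_if_conj_mult:
  fixes f :: "'a \<Rightarrow> real"
  assumes "finite V" "b \<in> V"
  shows "(\<Sum>k\<in>V. (if P \<and> k = b then 1 else 0) * f k) = (if P then f b else 0)"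
  using assms by (cases P) (simp_all add: if_distrib[of "\<lambda>y. y * f _"] cong: if_cong)

lemma jac_Some:
  assumes "finite V" "(a, b) \<in> D" "b \<in> V"
  shows "jac V D (Some (a, b)) (i, j) x =
    - x None * ((if i = a then id_minus_Lam D x j b else 0) + (if j = a then id_minus_Lam D x i b else 0))"
proof -
  have "dLam D (Some (a, b)) r k = (if r = a \<and> k = b then 1 else 0)" for r k
    using assms(2) by (auto simp: dLam_def)
  then have "jac V D (Some (a, b)) (i, j) x = - x None *
      ((\<Sum>k\<in>V. (if i = a \<and> k = b then 1 else 0) * id_minus_Lam D x j k)
       + (\<Sum>k\<in>V. (if j = a \<and> k = b then 1 else 0) * id_minus_Lam D x i k))"
    by (simp add: jac_eq sum.distrib mult.commute[of "id_minus_Lam D x i _"])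
  then show ?thesis using assms by (simp add: sum_if_conj_mult)
qed

lemma polyfun_id_minus_Lam: "(\<lambda>x. id_minus_Lam D x i k) \<in> polyfun (params D)"
proof (cases "(i, k) \<in> D")
  case True
  then have "(\<lambda>x. (\<lambda>x. if i = k then 1 else 0) x - (\<lambda>x. x (Some (i, k))) x) \<in> polyfun (params D)"
    by (intro polyfun_diff polyfun.const polyfun.var) (auto simp: params_def)
  with True show ?thesis by (simp add: id_minus_Lam_def Lam_def)
next
  case False
  then have "(\<lambda>x. id_minus_Lam D x i k) = (\<lambda>x. if i = k then 1 else 0)"
    by (simp add: id_minus_Lam_def Lam_def)
  then show ?thesis by (simp add: polyfun.const)
qed

lemma polyfun_jac:
  assumes "finite V"
  shows "jac V D \<theta> c \<in> polyfun (params D)"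
proof -
  obtain i j where c: "c = (i, j)" by fastforce
  have s: "(\<lambda>x. x None) \<in> polyfun (params D)" by (rule polyfun.var) (simp add: params_def)
  have "(\<lambda>x. (\<lambda>x. if \<theta> = None then 1 else 0) x * (\<lambda>x. \<Sum>k\<in>V. id_minus_Lam D x i k * id_minus_Lam D x j k) x
     - x None * (\<lambda>x. \<Sum>k\<in>V. dLam D \<theta> i k * id_minus_Lam D x j k + id_minus_Lam D x i k * dLam D \<theta> j k) x)
     \<in> polyfun (params D)"
    by (intro polyfun_diff polyfun.mult polyfun.add polyfun.const polyfun_sum assms polyfun_id_minus_Lam s)
  then show ?thesis by (simp add: c jac_eq[abs_def])
qed

section \<open>Independent sets of columns\<close>

lemma jac_indep_iff:
  "jac_indep V D C \<longleftrightarrow>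
     (\<forall>p. poly_relation (params D) (params D) C (jac V D) p \<longrightarrow> (\<forall>c\<in>C. \<forall>x. p c x = 0))"
  unfolding jac_indep_def poly_relation_def by blast

lemma finite_cols: "finite V \<Longrightarrow> finite (cols V)"
  by (rule finite_subset[of _ "V \<times> V"]) (auto simp: cols_def)

lemma card_params: "finite D \<Longrightarrow> card (params D) = card D + 1"
  by (simp add: params_def card_image)

lemma digraph_finite_edges: "digraph V D \<Longrightarrow> finite D"
  unfolding digraph_def by (auto intro: finite_subset[of D "V \<times> V"])

lemma card_jac_indep_le_rows:
  assumes "finite V" "finite D" "C \<subseteq> cols V" "R \<subseteq> params D"
    and vanish: "\<And>\<theta> c x. \<theta> \<in> params D - R \<Longrightarrow> c \<in> C \<Longrightarrow> jac V D \<theta> c x = 0"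
    and "jac_indep V D C"
  shows "card C \<le> card R"
proof (rule ccontr)
  assume "\<not> card C \<le> card R"
  moreover have "finite C" "finite R"
    using assms(1-4) finite_subset[OF _ finite_cols] finite_subset[of R "params D"]
    by (auto simp: params_def)
  ultimately obtain p where p: "poly_relation (params D) R C (jac V D) p" "\<exists>c\<in>C. \<exists>x. p c x \<noteq> 0"
    using poly_relation_nontrivial_exists[of R C "jac V D" "params D"] polyfun_jac[OF assms(1)]
    by fastforce
  have "(\<Sum>c\<in>C. p c x * jac V D \<theta> c x) = 0" if "\<theta> \<in> params D" for \<theta> x
    using p(1) vanish that by (cases "\<theta> \<in> R") (auto simp: poly_relation_def)
  then have "poly_relation (params D) (params D) C (jac V D) p"
    using p(1) by (simp add: poly_relation_def)
  with p(2) assms(6) show False by (auto simp: jac_indep_iff)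
qed

lemma jac_indep_if_indep_at:
  assumes "finite V" "C \<subseteq> cols V" "indep_at (params D) C (jac V D) x0"
  shows "jac_indep V D C"
  unfolding jac_indep_iff
  using poly_relation_trivial_if_indep_at[OF _ _ assms(3)] polyfun_jac[OF assms(1)]
    finite_subset[OF assms(2) finite_cols[OF assms(1)]]
  by blast

lemma card_jac_indep_le:
  assumes "digraph V D" "C \<subseteq> cols V" "jac_indep V D C"
  shows "card C \<le> card D + 1"
  using card_jac_indep_le_rows[of V D C "params D"] assms digraph_finite_edges[OF assms(1)]
  by (simp add: digraph_def card_params)

lemma card_jac_indep_avoiding_le:
  assumes dg: "digraph V D" and C: "C \<subseteq> cols V" "\<forall>(i, j)\<in>C. i \<noteq> k \<and> j \<noteq> k"
    and "jac_indep V D C"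
  shows "card C \<le> card D - card (ch D k) + 1"
proof -
  have fin: "finite V" "finite D" using dg digraph_finite_edges by (auto simp: digraph_def)
  define out where "out = Some ` (\<lambda>b. (k, b)) ` ch D k"
  have out: "out \<subseteq> params D" "card out = card (ch D k)"
    by (auto simp: out_def params_def ch_def card_image inj_on_def)
  have "card (params D - out) = card D + 1 - card (ch D k)"
    using out fin card_Diff_subset[OF finite_subset[OF out(1)] out(1)] card_params[of D]
    by (simp add: params_def)
  moreover have "card C \<le> card (params D - out)"
  proof (rule card_jac_indep_le_rows[OF fin C(1) _ _ assms(4)])
    fix \<theta> c x assume "\<theta> \<in> params D - (params D - out)" "c \<in> C"
    moreover from this obtain b where "\<theta> = Some (k, b)" "(k, b) \<in> D"
      by (auto simp: out_def ch_def)
    moreover have "b \<in> V" using dg \<open>(k, b) \<in> D\<close> by (auto simp: digraph_def)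
    ultimately show "jac V D \<theta> c x = 0" using C(2) jac_Some[OF fin(1)] by fastforce
  qed auto
  ultimately show ?thesis by linarith
qed

section \<open>Independent sets of maximal size\<close>

definition edge_col :: "'v::linorder \<times> 'v \<Rightarrow> 'v \<times> 'v" where
  "edge_col e = (min (fst e) (snd e), max (fst e) (snd e))"

lemma edge_col_in_cols: "digraph V D \<Longrightarrow> e \<in> D \<Longrightarrow> edge_col e \<in> cols V"
  by (cases e) (auto simp: digraph_def edge_col_def cols_def min_def max_def)

lemma edge_col_neq_diag: "digraph V D \<Longrightarrow> e \<in> D \<Longrightarrow> edge_col e \<noteq> (j, j)"
  by (cases e) (auto simp: digraph_def edge_col_def min_def max_def)

lemma edge_col_eq_iff: "edge_col (p, q) = edge_col (p', q') \<longleftrightarrow> (p', q') = (p, q) \<or> (p', q') = (q, p)"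
  by (auto simp: edge_col_def min_def max_def)

lemma edge_col_cases: "edge_col (i, j) = (i, j) \<or> edge_col (i, j) = (j, i)"
  by (simp add: edge_col_def min_def max_def)

lemma diag_notin_edge_cols: "digraph V D \<Longrightarrow> E \<subseteq> D \<Longrightarrow> (j, j) \<notin> edge_col ` E"
  using edge_col_neq_diag by (metis image_iff subsetD)

lemma inj_on_edge_col: "simple_digraph V D \<Longrightarrow> inj_on edge_col D"
  unfolding inj_on_def simple_digraph_def by (metis edge_col_eq_iff surj_pair)

lemma jac_edge_row:
  assumes dg: "digraph V D" and "(p, q) \<in> D" "x0 None = 1" "\<And>r. Lam D x0 r q = 0" "c \<in> cols V"
  shows "jac V D (Some (p, q)) c x0 = (if c = edge_col (p, q) then -1 else 0)"
proof -
  obtain i j where c: "c = (i, j)" "i \<le> j" using assms(5) by (auto simp: cols_def)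
  have "q \<in> V" "p \<noteq> q" "finite V" using dg assms(2) by (auto simp: digraph_def)
  then show ?thesis
    using jac_Some[OF \<open>finite V\<close> assms(2) \<open>q \<in> V\<close>, of i j x0] assms(3,4) c
    by (auto simp: id_minus_Lam_def edge_col_def min_def max_def)
qed

lemma coeff_edge_col_eq_0:
  assumes dg: "digraph V D" and pq: "(p, q) \<in> D" and x0: "x0 None = 1" "\<And>r. Lam D x0 r q = 0"
    and C: "C \<subseteq> cols V" "finite C" "edge_col (p, q) \<in> C"
    and row: "(\<Sum>c\<in>C. a c * jac V D (Some (p, q)) c x0) = 0"
  shows "a (edge_col (p, q)) = 0"
proof -
  have "(\<Sum>c\<in>C. a c * jac V D (Some (p, q)) c x0) = (\<Sum>c\<in>C. a c * (if c = edge_col (p, q) then -1 else 0))"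
  proof (rule sum.cong[OF refl])
    fix c assume "c \<in> C"
    then have "c \<in> cols V" using C(1) by blast
    then show "a c * jac V D (Some (p, q)) c x0 = a c * (if c = edge_col (p, q) then -1 else 0)"
      by (simp add: jac_edge_row[OF dg pq x0])
  qed
  also have "\<dots> = - a (edge_col (p, q))"
    using C(2,3) by (simp add: if_distrib[of "\<lambda>y. _ * y"] cong: if_cong)
  finally show ?thesis using row by simp
qed

lemma indep_at_union_edge_cols:
  assumes dg: "digraph V D" and E: "E \<subseteq> D"
    and x0: "x0 None = 1" "\<And>p q r. (p, q) \<in> E \<Longrightarrow> Lam D x0 r q = 0"
    and S: "S \<subseteq> cols V" "finite S" "S \<inter> edge_col ` E = {}"
    and indep: "indep_at (params D) S (jac V D) x0"
  shows "indep_at (params D) (S \<union> edge_col ` E) (jac V D) x0"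
  unfolding indep_at_def
proof (intro allI impI)
  have U: "edge_col ` E \<subseteq> cols V" "finite (edge_col ` E)"
    using edge_col_in_cols[OF dg] E finite_subset[OF E digraph_finite_edges[OF dg]] by blast+
  fix a assume rows: "\<forall>\<rho>\<in>params D. (\<Sum>c\<in>S \<union> edge_col ` E. a c * jac V D \<rho> c x0) = 0"
  have edge: "a (edge_col (p, q)) = 0" if pq: "(p, q) \<in> E" for p q
  proof (rule coeff_edge_col_eq_0[OF dg _ x0(1) x0(2)[OF pq]])
    show "(p, q) \<in> D" using pq E by blast
    show "S \<union> edge_col ` E \<subseteq> cols V" using S(1) U(1) by blast
    show "finite (S \<union> edge_col ` E)" using S(2) U(2) by blast
    show "edge_col (p, q) \<in> S \<union> edge_col ` E" using pq by blast
    show "(\<Sum>c\<in>S \<union> edge_col ` E. a c * jac V D (Some (p, q)) c x0) = 0"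
      using rows pq E by (auto simp: params_def)
  qed
  have "(\<Sum>c\<in>edge_col ` E. a c * jac V D \<rho> c x0) = 0" for \<rho>
    using edge by (auto intro!: sum.neutral)
  then have "(\<Sum>c\<in>S. a c * jac V D \<rho> c x0) = 0" if "\<rho> \<in> params D" for \<rho>
    using rows that S(2,3) U(2) by (simp add: sum.union_disjoint)
  then have "\<forall>c\<in>S. a c = 0" using indep by (simp add: indep_at_def)
  then show "\<forall>c\<in>S \<union> edge_col ` E. a c = 0" using edge by auto
qed

lemma jac_indep_union_edge_cols:
  assumes sd: "simple_digraph V D" and E: "E \<subseteq> D"
    and x0: "x0 None = 1" "\<And>p q r. (p, q) \<in> E \<Longrightarrow> Lam D x0 r q = 0"
    and S: "S \<subseteq> cols V" "S \<inter> edge_col ` E = {}"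
    and indep: "indep_at (params D) S (jac V D) x0"
  shows "jac_indep V D (S \<union> edge_col ` E)" "card (S \<union> edge_col ` E) = card S + card E"
proof -
  have dg: "digraph V D" using sd by (simp add: simple_digraph_def)
  then have fin: "finite V" "finite D" by (auto simp: digraph_def digraph_finite_edges)
  have U: "edge_col ` E \<subseteq> cols V" using edge_col_in_cols[OF dg] E by blast
  have finS: "finite S" "finite (edge_col ` E)"
    using S(1) U finite_subset finite_cols[OF fin(1)] by blast+
  show "card (S \<union> edge_col ` E) = card S + card E"
    using finS S(2) card_image[OF inj_on_subset[OF inj_on_edge_col[OF sd] E]]
    by (simp add: card_Un_disjoint)
  show "jac_indep V D (S \<union> edge_col ` E)"
    by (rule jac_indep_if_indep_at[OF fin(1) _ indep_at_union_edge_cols[OF dg E x0 S(1) finS(1) S(2) indep]])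
      (use S(1) U in blast)
qed

lemma exists_jac_indep_card_edges:
  assumes sd: "simple_digraph V D" and "v \<in> V"
  shows "\<exists>C\<subseteq>cols V. card C = card D + 1 \<and> jac_indep V D C"
proof -
  define x0 :: "'a param \<Rightarrow> real" where "x0 = (\<lambda>\<theta>. if \<theta> = None then 1 else 0)"
  have dg: "digraph V D" using sd by (simp add: simple_digraph_def)
  have v: "(v, v) \<in> cols V" "{(v, v)} \<inter> edge_col ` D = {}"
    using \<open>v \<in> V\<close> diag_notin_edge_cols[OF dg order.refl] by (auto simp: cols_def)
  have "id_minus_Lam D x0 i l = (if i = l then 1 else 0)" for i l
    by (simp add: id_minus_Lam_def Lam_def x0_def)
  then have "jac V D None (v, v) x0 = 1"
    using \<open>v \<in> V\<close> dg by (simp add: jac_None digraph_def if_distrib[of "\<lambda>y. y * _"] cong: if_cong)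
  then have "indep_at (params D) {(v, v)} (jac V D) x0"
    by (auto simp: indep_at_def params_def)
  with v have "jac_indep V D ({(v, v)} \<union> edge_col ` D)" "card ({(v, v)} \<union> edge_col ` D) = 1 + card D"
    using jac_indep_union_edge_cols[OF sd order.refl, of x0 "{(v, v)}"] by (auto simp: x0_def Lam_def)
  moreover have "{(v, v)} \<union> edge_col ` D \<subseteq> cols V" using v edge_col_in_cols[OF dg] by blast
  ultimately show ?thesis by (metis add.commute)
qed

definition parents :: "('v \<times> 'v) set \<Rightarrow> 'v \<Rightarrow> 'v set" where
  "parents D k = {j. (j, k) \<in> D}"

definition edges_avoiding :: "('v \<times> 'v) set \<Rightarrow> 'v \<Rightarrow> ('v \<times> 'v) set" where
  "edges_avoiding D k = {(i, j) \<in> D. i \<noteq> k \<and> j \<noteq> k}"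

lemma parents_subset: "digraph V D \<Longrightarrow> parents D k \<subseteq> V - {k}"
  by (auto simp: parents_def digraph_def)

lemma finite_parents: "digraph V D \<Longrightarrow> finite (parents D k)"
  using parents_subset by (metis finite_Diff digraph_def finite_subset)

lemma edges_avoiding_subset: "edges_avoiding D k \<subseteq> D"
  by (auto simp: edges_avoiding_def)

lemma card_edges_split:
  assumes dg: "digraph V D"
  shows "card D = card (edges_avoiding D k) + card (parents D k) + card (ch D k)"
proof -
  have fin: "finite D" using digraph_finite_edges[OF dg] .
  have "(k, k) \<notin> D" using dg by (simp add: digraph_def)
  then have D: "D = edges_avoiding D k \<union> (\<lambda>j. (j, k)) ` parents D k \<union> Pair k ` ch D k"
    and disj: "edges_avoiding D k \<inter> (\<lambda>j. (j, k)) ` parents D k = {}"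
      "(edges_avoiding D k \<union> (\<lambda>j. (j, k)) ` parents D k) \<inter> Pair k ` ch D k = {}"
    by (auto simp: edges_avoiding_def parents_def ch_def)
  have "finite (edges_avoiding D k)" "finite ((\<lambda>j. (j, k)) ` parents D k)" "finite (Pair k ` ch D k)"
    using fin by (auto intro: finite_subset simp: edges_avoiding_def parents_def ch_def)
  then have "card D = card (edges_avoiding D k) + card ((\<lambda>j. (j, k)) ` parents D k) + card (Pair k ` ch D k)"
    by (subst D) (simp add: card_Un_disjoint disj)
  then show ?thesis by (simp add: card_image inj_on_def)
qed

definition parent_point :: "'v \<Rightarrow> 'v param \<Rightarrow> real" where
  "parent_point k \<theta> = (case \<theta> of None \<Rightarrow> 1 | Some e \<Rightarrow> if snd e = k then 1 else 0)"

lemma id_minus_Lam_parent_point: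
  "id_minus_Lam D (parent_point k) r l = (if r = l then 1 else 0) - (if (r, l) \<in> D \<and> l = k then 1 else 0)"
  by (auto simp: id_minus_Lam_def Lam_def parent_point_def)

lemma jac_in_edge_at_parent_point:
  assumes dg: "digraph V D" and "(j, k) \<in> D" "r \<noteq> k" "s \<noteq> k"
  shows "jac V D (Some (j, k)) (r, s) (parent_point k) =
    (if r = j \<and> (s, k) \<in> D then 1 else 0) + (if s = j \<and> (r, k) \<in> D then 1 else 0)"
proof -
  have "finite V" "k \<in> V" using dg assms(2) by (auto simp: digraph_def)
  then show ?thesis
    using jac_Some[OF _ assms(2)] assms(3,4) by (simp add: id_minus_Lam_parent_point parent_point_def)
qed

lemma jac_None_at_parent_point:
  assumes dg: "digraph V D" and "k \<in> V" "r \<in> V" "r \<noteq> k" "s \<noteq> k"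
  shows "jac V D None (r, s) (parent_point k) =
    (if r = s then 1 else 0) + (if (r, k) \<in> D \<and> (s, k) \<in> D then 1 else 0)"
proof -
  have "jac V D None (r, s) (parent_point k) =
      (\<Sum>l\<in>V. (if l = r then (if r = s then 1 else 0) else 0)
        + (if l = k then (if (r, k) \<in> D \<and> (s, k) \<in> D then 1 else 0) else 0))"
    unfolding jac_None
    by (intro sum.cong refl) (use assms(4,5) in \<open>auto simp: id_minus_Lam_parent_point\<close>)
  also have "\<dots> = (if r = s then 1 else 0) + (if (r, k) \<in> D \<and> (s, k) \<in> D then 1 else 0)"
    using dg assms(2,3) by (simp add: sum.distrib digraph_def)
  finally show ?thesis .
qed

lemma jac_diag_at_parent_point:
  assumes dg: "digraph V D" and "k \<in> V" "r \<in> V" "r \<noteq> k"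
  shows "jac V D None (r, r) (parent_point k) = (if (r, k) \<in> D then 2 else 1)"
    and "(j, k) \<in> D \<Longrightarrow> jac V D (Some (j, k)) (r, r) (parent_point k) = (if r = j then 2 else 0)"
  using jac_None_at_parent_point[OF assms assms(4)] jac_in_edge_at_parent_point[OF dg _ assms(4,4)]
  by auto

lemma sum_diag_eq: "(\<Sum>c\<in>(\<lambda>j. (j, j)) ` P. f c) = (\<Sum>j\<in>P. f (j, j))"
  by (simp add: sum.reindex inj_on_def)

lemma sum_diag_in_edge_row_at_parent_point:
  assumes dg: "digraph V D" and k: "k \<in> V" and j: "(j, k) \<in> D" "j \<in> Q"
    and Q: "Q \<subseteq> V - {k}" "finite Q"
  shows "(\<Sum>r\<in>Q. a (r, r) * jac V D (Some (j, k)) (r, r) (parent_point k)) = 2 * a (j, j)"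
proof -
  have "(\<Sum>r\<in>Q. a (r, r) * jac V D (Some (j, k)) (r, r) (parent_point k))
      = (\<Sum>r\<in>Q. a (r, r) * (if r = j then 2 else 0))"
  proof (rule sum.cong[OF refl])
    fix r assume "r \<in> Q"
    with Q(1) have "r \<in> V" "r \<noteq> k" by auto
    then show "a (r, r) * jac V D (Some (j, k)) (r, r) (parent_point k) = a (r, r) * (if r = j then 2 else 0)"
      by (simp add: jac_diag_at_parent_point(2)[OF dg k _ _ j(1)])
  qed
  also have "\<dots> = 2 * a (j, j)"
    using Q(2) j(2) by (simp add: if_distrib[of "\<lambda>y. _ * y"] cong: if_cong)
  finally show ?thesis .
qed

lemma sum_diag_None_row_at_parent_point:
  assumes dg: "digraph V D" and k: "k \<in> V" and Q: "Q \<subseteq> V - {k}"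
  shows "(\<Sum>r\<in>Q. a (r, r) * jac V D None (r, r) (parent_point k))
    = (\<Sum>r\<in>Q. (if (r, k) \<in> D then 2 else 1) * a (r, r))"
proof (rule sum.cong[OF refl])
  fix r assume "r \<in> Q"
  with Q have "r \<in> V" "r \<noteq> k" by auto
  then show "a (r, r) * jac V D None (r, r) (parent_point k) = (if (r, k) \<in> D then 2 else 1) * a (r, r)"
    by (simp add: jac_diag_at_parent_point(1)[OF dg k])
qed

lemma indep_at_parent_point_diag:
  assumes dg: "digraph V D" and k: "k \<in> V" and m: "m \<in> V" "m \<noteq> k" "(m, k) \<notin> D"
  shows "indep_at (params D) ((\<lambda>j. (j, j)) ` insert m (parents D k)) (jac V D) (parent_point k)"
  unfolding indep_at_def
proof (intro allI impI)
  let ?Q = "insert m (parents D k)"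
  fix a assume rows: "\<forall>\<rho>\<in>params D. (\<Sum>c\<in>(\<lambda>j. (j, j)) ` ?Q. a c * jac V D \<rho> c (parent_point k)) = 0"
  have Q: "?Q \<subseteq> V - {k}" "finite ?Q" "m \<notin> parents D k"
    using parents_subset[OF dg] finite_parents[OF dg] m by (auto simp: parents_def)
  have row: "(\<Sum>r\<in>?Q. a (r, r) * jac V D \<rho> (r, r) (parent_point k)) = 0" if "\<rho> \<in> params D" for \<rho>
    using rows[rule_format, OF that] unfolding sum_diag_eq .
  have parent: "a (j, j) = 0" if "j \<in> parents D k" for j
    using row[of "Some (j, k)"] sum_diag_in_edge_row_at_parent_point[OF dg k _ _ Q(1,2)] that
    by (simp add: params_def parents_def)
  have "(\<Sum>r\<in>?Q. (if (r, k) \<in> D then 2 else 1) * a (r, r)) = a (m, m)"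
    using Q parent m(3) by simp
  then have "a (m, m) = 0"
    using row[of None] sum_diag_None_row_at_parent_point[OF dg k Q(1)] by (simp add: params_def)
  with parent show "\<forall>c\<in>(\<lambda>j. (j, j)) ` ?Q. a c = 0" by auto
qed

lemma indep_at_parent_point_pair:
  assumes dg: "digraph V D" and k: "k \<in> V" and pq: "(p, k) \<in> D" "(q, k) \<in> D" "p \<noteq> q"
  shows "indep_at (params D) (insert (p, q) ((\<lambda>j. (j, j)) ` parents D k)) (jac V D) (parent_point k)"
  unfolding indep_at_def
proof (intro allI impI)
  let ?P = "parents D k"
  fix a assume rows: "\<forall>\<rho>\<in>params D.
    (\<Sum>c\<in>insert (p, q) ((\<lambda>j. (j, j)) ` ?P). a c * jac V D \<rho> c (parent_point k)) = 0"
  have P: "?P \<subseteq> V - {k}" "finite ?P" "p \<in> ?P" "q \<in> ?P"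
    using parents_subset[OF dg] finite_parents[OF dg] pq by (auto simp: parents_def)
  have row: "a (p, q) * jac V D \<rho> (p, q) (parent_point k)
      + (\<Sum>r\<in>?P. a (r, r) * jac V D \<rho> (r, r) (parent_point k)) = 0" if "\<rho> \<in> params D" for \<rho>
  proof -
    have "(p, q) \<notin> (\<lambda>j. (j, j)) ` ?P" using pq(3) by auto
    then show ?thesis using rows[rule_format, OF that] P(2) by (simp add: sum_diag_eq)
  qed
  have parent: "a (p, q) * ((if p = j then 1 else 0) + (if q = j then 1 else 0)) + 2 * a (j, j) = 0"
    if j: "j \<in> ?P" for j
  proof -
    have "p \<noteq> k" "q \<noteq> k" using P by auto
    then have "jac V D (Some (j, k)) (p, q) (parent_point k) = (if p = j then 1 else 0) + (if q = j then 1 else 0)"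
      using jac_in_edge_at_parent_point[OF dg] j pq by (auto simp: parents_def)
    then show ?thesis
      using row[of "Some (j, k)"] sum_diag_in_edge_row_at_parent_point[OF dg k _ j P(1,2)] j
      by (simp add: params_def parents_def)
  qed
  have other: "a (j, j) = 0" if "j \<in> ?P" "j \<noteq> p" "j \<noteq> q" for j
    using parent[OF that(1)] that(2,3) by simp
  have pp: "a (p, q) + 2 * a (p, p) = 0" and qq: "a (p, q) + 2 * a (q, q) = 0"
    using parent[OF P(3)] parent[OF P(4)] pq(3) by auto
  have "(\<Sum>r\<in>?P. (if (r, k) \<in> D then 2 else 1) * a (r, r)) = (\<Sum>r\<in>{p, q}. 2 * a (r, r))"
    using P other by (intro sum.mono_neutral_cong_right) (auto simp: parents_def)
  moreover have "jac V D None (p, q) (parent_point k) = 1"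
    using jac_None_at_parent_point[OF dg k, of p q] P(1,3,4) pq by auto
  ultimately have "a (p, q) = 0"
    using row[of None] sum_diag_None_row_at_parent_point[OF dg k P(1)] pp qq pq(3)
    by (simp add: params_def)
  with other pp qq show "\<forall>c\<in>insert (p, q) ((\<lambda>j. (j, j)) ` ?P). a c = 0" by auto
qed

lemma exists_indep_at_parent_point_nonparent:
  assumes dg: "digraph V D" and k: "k \<in> V" and m: "m \<in> V" "m \<noteq> k" "(m, k) \<notin> D"
  shows "\<exists>S\<subseteq>cols V. (\<forall>(i, j)\<in>S. i \<noteq> k \<and> j \<noteq> k) \<and> S \<inter> edge_col ` edges_avoiding D k = {} \<and>
    card S = card (parents D k) + 1 \<and> indep_at (params D) S (jac V D) (parent_point k)"
proof -
  let ?S = "(\<lambda>j. (j, j)) ` insert m (parents D k)"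
  have "card ?S = card (insert m (parents D k))" by (rule card_image) (simp add: inj_on_def)
  then have "card ?S = card (parents D k) + 1"
    using finite_parents[OF dg] m by (simp add: parents_def)
  moreover have "?S \<subseteq> cols V" "\<forall>(i, j)\<in>?S. i \<noteq> k \<and> j \<noteq> k"
    using parents_subset[OF dg] m by (auto simp: cols_def)
  moreover have "?S \<inter> edge_col ` edges_avoiding D k = {}"
    using diag_notin_edge_cols[OF dg edges_avoiding_subset] by blast
  ultimately show ?thesis
    using indep_at_parent_point_diag[OF dg k m] by (intro exI[of _ ?S]) simp
qed

lemma exists_indep_at_parent_point_nonadjacent_parents:
  assumes dg: "digraph V D" and k: "k \<in> V"
    and pq: "(p, k) \<in> D" "(q, k) \<in> D" "p < q" "(p, q) \<notin> D" "(q, p) \<notin> D"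
  shows "\<exists>S\<subseteq>cols V. (\<forall>(i, j)\<in>S. i \<noteq> k \<and> j \<noteq> k) \<and> S \<inter> edge_col ` edges_avoiding D k = {} \<and>
    card S = card (parents D k) + 1 \<and> indep_at (params D) S (jac V D) (parent_point k)"
proof -
  let ?S = "insert (p, q) ((\<lambda>j. (j, j)) ` parents D k)"
  have par: "p \<in> parents D k" "q \<in> parents D k" using pq by (simp_all add: parents_def)
  have "card ((\<lambda>j. (j, j)) ` parents D k) = card (parents D k)"
    by (rule card_image) (simp add: inj_on_def)
  then have "card ?S = card (parents D k) + 1"
    using finite_parents[OF dg] pq(3) by (subst card_insert_disjoint) auto
  moreover have "?S \<subseteq> cols V" "\<forall>(i, j)\<in>?S. i \<noteq> k \<and> j \<noteq> k"
    using parents_subset[OF dg] par pq(3) by (auto simp: cols_def)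
  moreover have "(p, q) \<notin> edge_col ` edges_avoiding D k"
  proof
    assume "(p, q) \<in> edge_col ` edges_avoiding D k"
    then obtain a b where "(a, b) \<in> D" "edge_col (a, b) = edge_col (p, q)"
      using pq(3) by (auto simp: edges_avoiding_def edge_col_def)
    then show False using pq(4,5) edge_col_eq_iff by metis
  qed
  moreover have "indep_at (params D) ?S (jac V D) (parent_point k)"
    using indep_at_parent_point_pair[OF dg k pq(1,2)] pq(3) by simp
  moreover have "?S \<inter> edge_col ` edges_avoiding D k = {}"
    using calculation(4) diag_notin_edge_cols[OF dg edges_avoiding_subset] by blast
  ultimately show ?thesis by (intro exI[of _ ?S]) simp
qed

text \<open>If every other node is a parent of \<open>k\<close>, simplicity forces \<open>k\<close> to be childless, so by
  assumption two nodes are non-adjacent; they are then both parents of \<open>k\<close>.\<close>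
lemma exists_indep_at_parent_point:
  assumes sd: "simple_digraph V D" and k: "k \<in> V"
    and app: "ch D k \<noteq> {} \<or> \<not> complete_digraph V D"
  shows "\<exists>S\<subseteq>cols V. (\<forall>(i, j)\<in>S. i \<noteq> k \<and> j \<noteq> k) \<and> S \<inter> edge_col ` edges_avoiding D k = {} \<and>
    card S = card (parents D k) + 1 \<and> indep_at (params D) S (jac V D) (parent_point k)"
proof -
  have dg: "digraph V D" using sd by (simp add: simple_digraph_def)
  show ?thesis
  proof (cases "\<exists>m\<in>V. m \<noteq> k \<and> (m, k) \<notin> D")
    case True
    then obtain m where "m \<in> V" "m \<noteq> k" "(m, k) \<notin> D" by blast
    then show ?thesis by (rule exists_indep_at_parent_point_nonparent[OF dg k])
  next
    case False
    have "(b, k) \<in> D" if "(k, b) \<in> D" for b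
      using False that dg by (auto simp: digraph_def)
    then have "ch D k = {}" using sd by (auto simp: ch_def simple_digraph_def)
    with app obtain p q where pq: "p \<in> V" "q \<in> V" "p < q" "(p, q) \<notin> D" "(q, p) \<notin> D"
      unfolding complete_digraph_def by (metis linorder_neqE)
    then have "p \<noteq> k" "q \<noteq> k" using False by auto
    with False pq have "(p, k) \<in> D" "(q, k) \<in> D" by auto
    with pq show ?thesis by (intro exists_indep_at_parent_point_nonadjacent_parents[OF dg k])
  qed
qed

lemma exists_jac_indep_avoiding:
  assumes sd: "simple_digraph V D" and k: "k \<in> V"
    and app: "ch D k \<noteq> {} \<or> \<not> complete_digraph V D"
  shows "\<exists>C\<subseteq>cols V. (\<forall>(i, j)\<in>C. i \<noteq> k \<and> j \<noteq> k) \<and>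
    card C = card D - card (ch D k) + 1 \<and> jac_indep V D C"
proof -
  have dg: "digraph V D" using sd by (simp add: simple_digraph_def)
  let ?E = "edges_avoiding D k"
  obtain S where S: "S \<subseteq> cols V" "\<forall>(i, j)\<in>S. i \<noteq> k \<and> j \<noteq> k" "S \<inter> edge_col ` ?E = {}"
    "card S = card (parents D k) + 1" "indep_at (params D) S (jac V D) (parent_point k)"
    using exists_indep_at_parent_point[OF sd k app] by blast
  have E: "?E \<subseteq> D" "\<And>p q r. (p, q) \<in> ?E \<Longrightarrow> Lam D (parent_point k) r q = 0"
    by (auto simp: edges_avoiding_def Lam_def parent_point_def)
  have "parent_point k None = 1" by (simp add: parent_point_def)
  note union = jac_indep_union_edge_cols[OF sd E(1) this E(2) S(1,3,5)]
  have "S \<union> edge_col ` ?E \<subseteq> cols V" using S(1) edge_col_in_cols[OF dg] E(1) by blast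
  moreover have "\<forall>(i, j)\<in>S \<union> edge_col ` ?E. i \<noteq> k \<and> j \<noteq> k"
  proof -
    have "i \<noteq> k \<and> j \<noteq> k" if "(i, j) = edge_col (a, b)" "(a, b) \<in> ?E" for i j a b
      using that edge_col_cases[of a b] by (auto simp: edges_avoiding_def)
    then show ?thesis using S(2) by fastforce
  qed
  moreover have "card (S \<union> edge_col ` ?E) = card D - card (ch D k) + 1"
    using union(2) S(4) card_edges_split[OF dg, of k] by simp
  ultimately show ?thesis using union(1) by (intro exI[of _ "S \<union> edge_col ` ?E"]) simp
qed

section \<open>The matroid determines the numbers of children\<close>

lemma card_edges_eq_if_jac_indep_eq:
  assumes "simple_digraph V D1" "simple_digraph V D2" "v \<in> V"
    and indep: "\<And>C. C \<subseteq> cols V \<Longrightarrow> jac_indep V D1 C \<longleftrightarrow> jac_indep V D2 C"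
  shows "card D1 = card D2"
proof -
  have "card D \<le> card D'"
    if D: "simple_digraph V D" and D': "simple_digraph V D'"
      and imp: "\<And>C. C \<subseteq> cols V \<Longrightarrow> jac_indep V D C \<Longrightarrow> jac_indep V D' C" for D D'
  proof -
    obtain C where "C \<subseteq> cols V" "card C = card D + 1" "jac_indep V D C"
      using exists_jac_indep_card_edges[OF D \<open>v \<in> V\<close>] by blast
    then show ?thesis using card_jac_indep_le[of V D' C] D' imp by (simp add: simple_digraph_def)
  qed
  then show ?thesis using assms by (meson le_antisym)
qed

lemma card_ch_eq_if_jac_indep_eq:
  assumes sd: "simple_digraph V D1" "simple_digraph V D2" and k: "k \<in> V"
    and indep: "\<And>C. C \<subseteq> cols V \<Longrightarrow> jac_indep V D1 C \<longleftrightarrow> jac_indep V D2 C"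
    and "card D1 = card D2"
    and app: "ch D1 k \<noteq> {} \<or> \<not> complete_digraph V D1" "ch D2 k \<noteq> {} \<or> \<not> complete_digraph V D2"
  shows "card (ch D1 k) = card (ch D2 k)"
proof -
  have le: "card D - card (ch D k) \<le> card D' - card (ch D' k)"
    if D: "simple_digraph V D" and D': "digraph V D'" and app: "ch D k \<noteq> {} \<or> \<not> complete_digraph V D"
      and imp: "\<And>C. C \<subseteq> cols V \<Longrightarrow> jac_indep V D C \<Longrightarrow> jac_indep V D' C" for D D'
  proof -
    obtain C where "C \<subseteq> cols V" "\<forall>(i, j)\<in>C. i \<noteq> k \<and> j \<noteq> k"
      "card C = card D - card (ch D k) + 1" "jac_indep V D C"
      using exists_jac_indep_avoiding[OF D k app] by blast
    then show ?thesis using card_jac_indep_avoiding_le[OF D'] imp by fastforce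
  qed
  have dg: "digraph V D1" "digraph V D2" using sd by (simp_all add: simple_digraph_def)
  have "card D1 - card (ch D1 k) \<le> card D2 - card (ch D2 k)"
    using le[OF sd(1) dg(2) app(1)] indep by blast
  moreover have "card D2 - card (ch D2 k) \<le> card D1 - card (ch D1 k)"
    using le[OF sd(2) dg(1) app(2)] indep by blast
  moreover have "card (ch D1 k) \<le> card D1" "card (ch D2 k) \<le> card D2"
    using card_edges_split[OF dg(1), of k] card_edges_split[OF dg(2), of k] by simp_all
  ultimately show ?thesis using \<open>card D1 = card D2\<close> by linarith
qed

lemma card_edges_eq_sum_card_ch:
  assumes "digraph V D"
  shows "card D = (\<Sum>k\<in>V. card (ch D k))"
proof -
  have "D = (SIGMA k:V. ch D k)" using assms by (auto simp: digraph_def ch_def)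
  then have "card D = card (SIGMA k:V. ch D k)" by (rule arg_cong)
  moreover have "finite (ch D k)" for k
    using finite_imageI[OF digraph_finite_edges[OF assms], of snd]
    by (rule finite_subset[rotated]) (force simp: ch_def)
  ultimately show ?thesis using assms by (simp add: card_SigmaI digraph_def)
qed

lemma exists_less_if_sum_eq:
  fixes f g :: "'a \<Rightarrow> nat"
  assumes "finite A" "(\<Sum>a\<in>A. f a) = (\<Sum>a\<in>A. g a)" "i \<in> A" "f i \<noteq> g i"
  shows "\<exists>a\<in>A. f a < g a"
proof (rule ccontr)
  assume "\<not> ?thesis"
  then have "\<forall>a\<in>A. g a \<le> f a" "g i < f i" using assms(3,4) by (auto simp: not_less)
  then have "(\<Sum>a\<in>A. g a) < (\<Sum>a\<in>A. f a)" using sum_strict_mono_ex1[OF assms(1)] assms(3) by blast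
  with assms(2) show False by simp
qed

theorem theorem4p5:
  fixes V :: "'v::linorder set" and D1 D2 :: "('v \<times> 'v) set"
  assumes "simple_digraph V D1" and "simple_digraph V D2"
    and "\<not> complete_digraph V D1 \<or> \<not> complete_digraph V D2"
    and "\<exists>i\<in>V. card (ch D1 i) \<noteq> card (ch D2 i)"
  shows "jacobian_matroid V D1 \<noteq> jacobian_matroid V D2"
proof
  assume "jacobian_matroid V D1 = jacobian_matroid V D2"
  then have indep: "jac_indep V D1 C \<longleftrightarrow> jac_indep V D2 C" if "C \<subseteq> cols V" for C
    using that unfolding jacobian_matroid_def by blast
  obtain i where i: "i \<in> V" "card (ch D1 i) \<noteq> card (ch D2 i)" using assms(4) by blast
  have dg: "digraph V D1" "digraph V D2" using assms(1,2) by (simp_all add: simple_digraph_def)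
  have "card D1 = card D2" using card_edges_eq_if_jac_indep_eq[OF assms(1,2) i(1) indep] .
  then have sums: "(\<Sum>k\<in>V. card (ch D1 k)) = (\<Sum>k\<in>V. card (ch D2 k))"
    using card_edges_eq_sum_card_ch[OF dg(1)] card_edges_eq_sum_card_ch[OF dg(2)] by simp
  obtain k1 where k1: "k1 \<in> V" "card (ch D2 k1) < card (ch D1 k1)"
    using exists_less_if_sum_eq[OF _ sums[symmetric] i(1)] i(2) dg(1) by (auto simp: digraph_def)
  obtain k2 where k2: "k2 \<in> V" "card (ch D1 k2) < card (ch D2 k2)"
    using exists_less_if_sum_eq[OF _ sums i] dg(1) by (auto simp: digraph_def)
  note card_ch_eq = card_ch_eq_if_jac_indep_eq[OF assms(1,2) _ indep \<open>card D1 = card D2\<close>]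
  show False
  proof (cases "complete_digraph V D2")
    case False
    then show False using card_ch_eq[OF k1(1)] k1(2) by fastforce
  next
    case True
    then show False using card_ch_eq[OF k2(1)] k2(2) assms(3) by fastforce
  qed
qed

end
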